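(* Let $M$ be a monoid with identity $1$ (not necessarily finite). (i) If $M$ is a group, then $\sigma_m(M)=\sigma_m^*(M)=\sigma_s(M)$. (ii) If $S=M-\{1\}$ is nonempty and is a subsemigroup of $M$, then $\sigma_m^*(M)\le\sigma_m(M)=\sigma_s(S)$ and $\sigma_s(M)=2$. (iii) If $M$ is not a group and $M-\{1\}$ is not a nonempty subsemigroup of $M$, then $\sigma_m(M)=\sigma_m^*(M)=\sigma_s(M)=2$.
   Context: A subsemigroup is a nonempty subset closed under the operation. For a monoid $M$: a submonoid is a subsemigroup containing the identity of $M$; a monoidal subsemigroup is a subsemigroup that is a monoid in its own right (its identity need not be that of $M$). $\sigma_s(M)$, $\sigma_m(M)$, $\sigma_m^*(M)$ denote the least positive integer $n$ such that $M$ is the union of $n$ proper subsemigroups, proper submonoids, respectively proper monoidal subsemigroups; each is $\infty$ if no such finite $n$ exists. For a semigroup $S$, $\sigma_s(S)$ is defined analogously with proper subsemigroups. *)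

theory Defs
  imports "HOL-Algebra.Group" "HOL-Library.Extended_Nat"
begin

definition is_subsemigroup :: "('a \<Rightarrow> 'a \<Rightarrow> 'a) \<Rightarrow> 'a set \<Rightarrow> 'a set \<Rightarrow> bool" where
  "is_subsemigroup f A H \<longleftrightarrow> H \<subseteq> A \<and> H \<noteq> {} \<and> (\<forall>x\<in>H. \<forall>y\<in>H. f x y \<in> H)"

definition covnum :: "('a set \<Rightarrow> bool) \<Rightarrow> 'a set \<Rightarrow> enat" where
  "covnum P A =
     (if \<exists>F. finite F \<and> (\<forall>H\<in>F. P H \<and> H \<noteq> A) \<and> \<Union>F = A
      then enat (LEAST n. \<exists>F. finite F \<and> card F = n \<and> (\<forall>H\<in>F. P H \<and> H \<noteq> A) \<and> \<Union>F = A)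
      else \<infinity>)"

definition sigma_s_semi :: "('a \<Rightarrow> 'a \<Rightarrow> 'a) \<Rightarrow> 'a set \<Rightarrow> enat" where
  "sigma_s_semi f A = covnum (is_subsemigroup f A) A"

definition sigma_s :: "('a, 'b) monoid_scheme \<Rightarrow> enat" where
  "sigma_s M = sigma_s_semi (mult M) (carrier M)"

definition is_submonoid :: "('a, 'b) monoid_scheme \<Rightarrow> 'a set \<Rightarrow> bool" where
  "is_submonoid M H \<longleftrightarrow> is_subsemigroup (mult M) (carrier M) H \<and> one M \<in> H"

definition is_monoidal_subsemigroup :: "('a, 'b) monoid_scheme \<Rightarrow> 'a set \<Rightarrow> bool" where
  "is_monoidal_subsemigroup M H \<longleftrightarrow> is_subsemigroup (mult M) (carrier M) H \<and>
     (\<exists>e\<in>H. \<forall>x\<in>H. mult M e x = x \<and> mult M x e = x)"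

definition sigma_m :: "('a, 'b) monoid_scheme \<Rightarrow> enat" where
  "sigma_m M = covnum (is_submonoid M) (carrier M)"

definition sigma_m_star :: "('a, 'b) monoid_scheme \<Rightarrow> enat" where
  "sigma_m_star M = covnum (is_monoidal_subsemigroup M) (carrier M)"

end

theory Submission
  imports Defs
begin

text \<open>
  Every submonoid is a monoidal subsemigroup and every monoidal subsemigroup is a subsemigroup,
  so sigma_s \<le> sigma_m_star \<le> sigma_m, and all three are at least 2.
  In a group, adjoining 1 to a proper subsemigroup H keeps it proper: otherwise H contains every
  x \<noteq> 1 together with its inverse, hence 1.  So covers by subsemigroups become covers by submonoids
  of no larger size.  If S = M - {1} is a subsemigroup, H \<mapsto> H - {1} and K \<mapsto> K \<union> {1} translate
  covers of M by proper submonoids into covers of S by proper subsemigroups and back, and {S, {1}}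
  covers M.  Otherwise some a b = 1 with a, b \<noteq> 1; if M is not a group, the right (or left)
  invertible elements form a proper submonoid T containing a (or b), and (M - T) \<union> {1} is a
  submonoid as well, giving a cover by two proper submonoids.
\<close>

definition is_cover :: "('a set \<Rightarrow> bool) \<Rightarrow> 'a set \<Rightarrow> 'a set set \<Rightarrow> bool" where
  "is_cover P A F \<longleftrightarrow> finite F \<and> (\<forall>H\<in>F. P H \<and> H \<noteq> A) \<and> \<Union>F = A"

lemma covnum_le_card: "is_cover P A F \<Longrightarrow> covnum P A \<le> enat (card F)"
  unfolding covnum_def is_cover_def by (auto intro!: Least_le)

lemma covnum_attained:
  assumes "is_cover P A F0"
  obtains F where "is_cover P A F" "covnum P A = enat (card F)"
proof -
  let ?Q = "\<lambda>n. \<exists>F. finite F \<and> card F = n \<and> (\<forall>H\<in>F. P H \<and> H \<noteq> A) \<and> \<Union>F = A"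
  have "?Q (card F0)" using assms unfolding is_cover_def by blast
  then have "?Q (Least ?Q)" by (rule LeastI)
  then obtain F where F: "is_cover P A F" "card F = Least ?Q" unfolding is_cover_def by blast
  then have "covnum P A = enat (card F)" unfolding covnum_def is_cover_def by auto
  with F(1) show thesis by (rule that)
qed

lemma covnum_eq_infinity: "\<nexists>F. is_cover P A F \<Longrightarrow> covnum P A = \<infinity>"
  unfolding covnum_def is_cover_def by auto

lemma covnum_le_covnum:
  assumes "\<And>F. is_cover P A F \<Longrightarrow> \<exists>G. is_cover Q B G \<and> card G \<le> card F"
  shows "covnum Q B \<le> covnum P A"
proof (cases "\<exists>F. is_cover P A F")
  case True
  then obtain F where F: "is_cover P A F" "covnum P A = enat (card F)"
    using covnum_attained by metis
  then obtain G where G: "is_cover Q B G" "card G \<le> card F" using assms by blast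
  have "covnum Q B \<le> enat (card G)" using G(1) by (rule covnum_le_card)
  also have "\<dots> \<le> covnum P A" using F(2) G(2) by simp
  finally show ?thesis .
qed (simp add: covnum_eq_infinity)

lemma covnum_mono: "(\<And>H. P H \<Longrightarrow> Q H) \<Longrightarrow> covnum Q A \<le> covnum P A"
  by (rule covnum_le_covnum) (auto simp: is_cover_def)

lemma covnum_ge_2:
  assumes "A \<noteq> {}"
  shows "2 \<le> covnum P A"
proof (cases "\<exists>F. is_cover P A F")
  case True
  then obtain F where F: "is_cover P A F" "covnum P A = enat (card F)"
    using covnum_attained by metis
  have "card F \<noteq> 0" using F(1) assms by (auto simp: is_cover_def)
  moreover have "card F \<noteq> 1" using F(1) by (auto simp: is_cover_def card_1_singleton_iff)
  ultimately show ?thesis using F(2) by (simp add: numeral_eq_enat)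
qed (simp add: covnum_eq_infinity)

lemma covnum_le_2:
  assumes "is_cover P A {X, Y}"
  shows "covnum P A \<le> 2"
proof -
  have "card {X, Y} \<le> 2" by (simp add: card_insert_if)
  then show ?thesis using covnum_le_card[OF assms] numeral_eq_enat order_trans enat_ord_simps(1) by metis
qed

lemma sigma_m_star_le_sigma_m:
  fixes M (structure)
  assumes "monoid M"
  shows "sigma_m_star M \<le> sigma_m M"
  unfolding sigma_m_star_def sigma_m_def
proof (rule covnum_mono)
  fix H assume "is_submonoid M H"
  then show "is_monoidal_subsemigroup M H"
    using assms unfolding is_submonoid_def is_monoidal_subsemigroup_def is_subsemigroup_def
    by (auto simp: monoid.l_one monoid.r_one subset_iff intro!: bexI[of _ "\<one>"])
qed

lemma sigma_s_le_sigma_m_star: "sigma_s M \<le> sigma_m_star M"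
  unfolding sigma_m_star_def sigma_s_def sigma_s_semi_def
  by (rule covnum_mono) (simp add: is_monoidal_subsemigroup_def)

lemma sigma_s_ge_2: "monoid M \<Longrightarrow> 2 \<le> sigma_s M"
  unfolding sigma_s_def sigma_s_semi_def by (rule covnum_ge_2) (auto dest: monoid.one_closed)

lemma is_submonoid_insert_one:
  fixes M (structure)
  assumes "monoid M" "is_subsemigroup (mult M) (carrier M) H"
  shows "is_submonoid M (insert \<one> H)"
  using assms unfolding is_submonoid_def is_subsemigroup_def
  by (auto simp: monoid.l_one monoid.r_one monoid.one_closed subset_iff)

lemma group_insert_one_proper:
  fixes G (structure)
  assumes "group G" "is_subsemigroup (mult G) (carrier G) H" "H \<noteq> carrier G"
  shows "insert \<one> H \<noteq> carrier G"
proof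
  interpret group G by fact
  assume H1: "insert \<one> H = carrier G"
  have H: "H \<subseteq> carrier G" "H \<noteq> {}" "\<forall>x\<in>H. \<forall>y\<in>H. x \<otimes> y \<in> H"
    using assms(2) unfolding is_subsemigroup_def by auto
  have "\<one> \<notin> H" using H1 assms(3) by (metis insert_absorb)
  obtain x where x: "x \<in> H" using H(2) by blast
  then have "x \<in> carrier G" "x \<noteq> \<one>" using H(1) \<open>\<one> \<notin> H\<close> by auto
  then have "inv x \<in> H" using H1 by (metis inv_closed inv_inv inv_one insertE)
  then have "x \<otimes> inv x \<in> H" using x H(3) by blast
  with \<open>x \<in> carrier G\<close> \<open>\<one> \<notin> H\<close> show False by simp
qed

lemma sigma_m_le_covnum_insert_one:
  fixes M (structure)
  assumes "monoid M" "insert \<one> B = carrier M" "B \<noteq> {}"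
    and proper: "\<And>H. is_subsemigroup (mult M) B H \<Longrightarrow> H \<noteq> B \<Longrightarrow> insert \<one> H \<noteq> carrier M"
  shows "sigma_m M \<le> covnum (is_subsemigroup (mult M) B) B"
  unfolding sigma_m_def
proof (rule covnum_le_covnum)
  fix F assume F: "is_cover (is_subsemigroup (mult M) B) B F"
  have "is_cover (is_submonoid M) (carrier M) (insert \<one> ` F)"
    unfolding is_cover_def
  proof (intro conjI ballI)
    fix K assume "K \<in> insert \<one> ` F"
    then obtain H where H: "H \<in> F" "K = insert \<one> H" by blast
    then have "is_subsemigroup (mult M) B H" "H \<noteq> B" using F by (auto simp: is_cover_def)
    moreover have "is_subsemigroup (mult M) (carrier M) H"
      using calculation(1) assms(2) by (auto simp: is_subsemigroup_def)
    ultimately show "is_submonoid M K" "K \<noteq> carrier M"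
      using is_submonoid_insert_one[OF assms(1)] proper H(2) by auto
  qed (use F assms(2,3) in \<open>auto simp: is_cover_def\<close>)
  moreover have "card (insert \<one> ` F) \<le> card F"
    using F by (simp add: card_image_le is_cover_def)
  ultimately show "\<exists>G. is_cover (is_submonoid M) (carrier M) G \<and> card G \<le> card F" by blast
qed

lemma group_sigma_m_le_sigma_s:
  fixes G (structure)
  assumes "group G"
  shows "sigma_m G \<le> sigma_s G"
  unfolding sigma_s_def sigma_s_semi_def
proof (rule sigma_m_le_covnum_insert_one)
  interpret group G by fact
  show "monoid G" "insert \<one> (carrier G) = carrier G" "carrier G \<noteq> {}" by auto
qed (rule group_insert_one_proper[OF assms])

context
  fixes M (structure)
  assumes monoid: "monoid M"
    and S_subsemigroup: "is_subsemigroup (mult M) (carrier M) (carrier M - {\<one>})"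
    and S_nonempty: "carrier M - {\<one>} \<noteq> {}"
begin

lemma sigma_s_eq_2: "sigma_s M = 2"
proof -
  have "is_cover (is_subsemigroup (mult M) (carrier M)) (carrier M) {carrier M - {\<one>}, {\<one>}}"
    using S_subsemigroup S_nonempty monoid.one_closed[OF monoid]
    unfolding is_cover_def by (auto simp: is_subsemigroup_def monoid.l_one[OF monoid])
  then have "sigma_s M \<le> 2" unfolding sigma_s_def sigma_s_semi_def by (rule covnum_le_2)
  with sigma_s_ge_2[OF monoid] show ?thesis by simp
qed

lemma sigma_m_le_sigma_s_nonidentity: "sigma_m M \<le> sigma_s_semi (mult M) (carrier M - {\<one>})"
  unfolding sigma_s_semi_def
proof (rule sigma_m_le_covnum_insert_one[OF monoid _ S_nonempty])
  show "insert \<one> (carrier M - {\<one>}) = carrier M" using monoid.one_closed[OF monoid] by blast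
  fix H assume "is_subsemigroup (mult M) (carrier M - {\<one>}) H" "H \<noteq> carrier M - {\<one>}"
  then show "insert \<one> H \<noteq> carrier M" unfolding is_subsemigroup_def by blast
qed

lemma sigma_s_nonidentity_le_sigma_m: "sigma_s_semi (mult M) (carrier M - {\<one>}) \<le> sigma_m M"
  unfolding sigma_m_def sigma_s_semi_def
proof (rule covnum_le_covnum)
  let ?S = "carrier M - {\<one>}"
  fix F assume F: "is_cover (is_submonoid M) (carrier M) F"
  let ?G = "(\<lambda>H. H - {\<one>}) ` (F - {{\<one>}})"
  have "is_cover (is_subsemigroup (mult M) ?S) ?S ?G"
    unfolding is_cover_def
  proof (intro conjI ballI)
    fix K assume "K \<in> ?G"
    then obtain H where H: "H \<in> F" "H \<noteq> {\<one>}" "K = H - {\<one>}" by blast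
    have "is_submonoid M H" "H \<noteq> carrier M" using F H(1) by (auto simp: is_cover_def)
    then have HC: "H \<subseteq> carrier M" "\<one> \<in> H" "\<forall>x\<in>H. \<forall>y\<in>H. x \<otimes> y \<in> H" "H \<noteq> carrier M"
      unfolding is_submonoid_def is_subsemigroup_def by auto
    have "\<forall>x\<in>?S. \<forall>y\<in>?S. x \<otimes> y \<in> ?S"
      using S_subsemigroup unfolding is_subsemigroup_def by blast
    then show "is_subsemigroup (mult M) ?S K"
      using HC H(2,3) unfolding is_subsemigroup_def by auto
    show "K \<noteq> ?S" using HC H(3) by auto
  next
    have "x \<in> \<Union>?G" if "x \<in> ?S" for x
    proof -
      obtain H where "H \<in> F" "x \<in> H" using F \<open>x \<in> ?S\<close> unfolding is_cover_def by blast
      with \<open>x \<in> ?S\<close> show ?thesis by blast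
    qed
    moreover have "\<Union>?G \<subseteq> ?S" using F unfolding is_cover_def by blast
    ultimately show "\<Union>?G = ?S" by blast
  qed (use F in \<open>simp add: is_cover_def\<close>)
  moreover have "card ?G \<le> card F"
  proof -
    have "finite F" using F by (simp add: is_cover_def)
    then have "card ?G \<le> card (F - {{\<one>}})" by (simp add: card_image_le)
    also have "\<dots> \<le> card F" using \<open>finite F\<close> by (simp add: card_mono)
    finally show ?thesis .
  qed
  ultimately show "\<exists>G. is_cover (is_subsemigroup (mult M) ?S) ?S G \<and> card G \<le> card F" by blast
qed

end

text \<open>
  The hypothesis on T is exactly what makes (M - T) \<union> {1} closed under multiplication.
\<close>
lemma sigma_m_le_2:
  fixes M (structure)
  assumes "monoid M" "is_submonoid M T" "T \<noteq> carrier M" "a \<in> T" "a \<noteq> \<one>"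
    and prime: "\<And>x y. x \<in> carrier M \<Longrightarrow> y \<in> carrier M \<Longrightarrow> x \<otimes> y \<in> T \<Longrightarrow> x \<in> T \<or> y \<in> T"
  shows "sigma_m M \<le> 2"
  unfolding sigma_m_def
proof (rule covnum_le_2)
  interpret monoid M by fact
  let ?T' = "insert \<one> (carrier M - T)"
  have "x \<otimes> y \<in> ?T'" if "x \<in> ?T'" "y \<in> ?T'" for x y
  proof (cases "x = \<one> \<or> y = \<one>")
    case True
    then show ?thesis using that by auto
  next
    case False
    then have "x \<in> carrier M - T" "y \<in> carrier M - T" using that by auto
    then show ?thesis using prime by blast
  qed
  then have "is_submonoid M ?T'" unfolding is_submonoid_def is_subsemigroup_def by auto
  moreover have "T \<subseteq> carrier M" using assms(2) unfolding is_submonoid_def is_subsemigroup_def by blast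
  ultimately show "is_cover (is_submonoid M) (carrier M) {T, ?T'}"
    using assms(2-5) unfolding is_cover_def by auto
qed

definition right_invertibles :: "('a, 'b) monoid_scheme \<Rightarrow> 'a set" where
  "right_invertibles M = {x \<in> carrier M. \<exists>y\<in>carrier M. x \<otimes>\<^bsub>M\<^esub> y = \<one>\<^bsub>M\<^esub>}"

definition left_invertibles :: "('a, 'b) monoid_scheme \<Rightarrow> 'a set" where
  "left_invertibles M = {x \<in> carrier M. \<exists>y\<in>carrier M. y \<otimes>\<^bsub>M\<^esub> x = \<one>\<^bsub>M\<^esub>}"

context monoid
begin

lemma is_submonoid_right_invertibles: "is_submonoid G (right_invertibles G)"
  unfolding is_submonoid_def is_subsemigroup_def right_invertibles_def
proof (intro conjI ballI)
  fix x y assume "x \<in> {x \<in> carrier G. \<exists>y\<in>carrier G. x \<otimes> y = \<one>}"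
    and "y \<in> {x \<in> carrier G. \<exists>y\<in>carrier G. x \<otimes> y = \<one>}"
  then obtain x' y' where "x \<in> carrier G" "x' \<in> carrier G" "x \<otimes> x' = \<one>"
    and "y \<in> carrier G" "y' \<in> carrier G" "y \<otimes> y' = \<one>" by blast
  then have "(x \<otimes> y) \<otimes> (y' \<otimes> x') = \<one>" by (metis m_assoc m_closed l_one)
  with \<open>x \<in> carrier G\<close> \<open>y \<in> carrier G\<close> \<open>x' \<in> carrier G\<close> \<open>y' \<in> carrier G\<close>
  show "x \<otimes> y \<in> {x \<in> carrier G. \<exists>y\<in>carrier G. x \<otimes> y = \<one>}" by auto
qed (auto intro!: bexI[of _ \<one>])

lemma is_submonoid_left_invertibles: "is_submonoid G (left_invertibles G)"
  unfolding is_submonoid_def is_subsemigroup_def left_invertibles_def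
proof (intro conjI ballI)
  fix x y assume "x \<in> {x \<in> carrier G. \<exists>y\<in>carrier G. y \<otimes> x = \<one>}"
    and "y \<in> {x \<in> carrier G. \<exists>y\<in>carrier G. y \<otimes> x = \<one>}"
  then obtain x' y' where "x \<in> carrier G" "x' \<in> carrier G" "x' \<otimes> x = \<one>"
    and "y \<in> carrier G" "y' \<in> carrier G" "y' \<otimes> y = \<one>" by blast
  then have "(y' \<otimes> x') \<otimes> (x \<otimes> y) = \<one>" by (metis m_assoc m_closed l_one)
  with \<open>x \<in> carrier G\<close> \<open>y \<in> carrier G\<close> \<open>x' \<in> carrier G\<close> \<open>y' \<in> carrier G\<close>
  show "x \<otimes> y \<in> {x \<in> carrier G. \<exists>y\<in>carrier G. y \<otimes> x = \<one>}" by auto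
qed (auto intro!: bexI[of _ \<one>])

lemma right_invertibles_mult_left:
  "x \<in> carrier G \<Longrightarrow> y \<in> carrier G \<Longrightarrow> x \<otimes> y \<in> right_invertibles G \<Longrightarrow> x \<in> right_invertibles G"
proof -
  assume "x \<in> carrier G" "y \<in> carrier G" "x \<otimes> y \<in> right_invertibles G"
  then obtain w where "w \<in> carrier G" "x \<otimes> (y \<otimes> w) = \<one>"
    unfolding right_invertibles_def by (auto simp: m_assoc)
  with \<open>x \<in> carrier G\<close> \<open>y \<in> carrier G\<close> show ?thesis
    unfolding right_invertibles_def by blast
qed

lemma left_invertibles_mult_right:
  "x \<in> carrier G \<Longrightarrow> y \<in> carrier G \<Longrightarrow> x \<otimes> y \<in> left_invertibles G \<Longrightarrow> y \<in> left_invertibles G"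
proof -
  assume "x \<in> carrier G" "y \<in> carrier G" "x \<otimes> y \<in> left_invertibles G"
  then obtain w where "w \<in> carrier G" "(w \<otimes> x) \<otimes> y = \<one>"
    unfolding left_invertibles_def by (auto simp: m_assoc)
  with \<open>x \<in> carrier G\<close> \<open>y \<in> carrier G\<close> show ?thesis
    unfolding left_invertibles_def by blast
qed

lemma group_if_all_invertible:
  assumes "right_invertibles G = carrier G" "left_invertibles G = carrier G"
  shows "group G"
proof -
  have "carrier G \<subseteq> Units G"
  proof
    fix x assume x: "x \<in> carrier G"
    then obtain y z where y: "y \<in> carrier G" "x \<otimes> y = \<one>" and z: "z \<in> carrier G" "z \<otimes> x = \<one>"
      using assms unfolding right_invertibles_def left_invertibles_def by blast
    have "z = z \<otimes> (x \<otimes> y)" using y z by simp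
    also have "\<dots> = (z \<otimes> x) \<otimes> y" by (rule m_assoc[OF z(1) x y(1), symmetric])
    also have "\<dots> = y" using y z by simp
    finally have "z = y" .
    with x y z show "x \<in> Units G" unfolding Units_def by auto
  qed
  then show ?thesis by (simp add: group_def group_axioms_def monoid_axioms)
qed

end

lemma non_group_sigma_m_le_2:
  fixes M (structure)
  assumes monoid: "monoid M" and "\<not> group M"
    and not_S: "\<not> (carrier M - {\<one>} \<noteq> {} \<and> is_subsemigroup (mult M) (carrier M) (carrier M - {\<one>}))"
  shows "sigma_m M \<le> 2"
proof -
  interpret monoid M by fact
  have "carrier M - {\<one>} \<noteq> {}"
  proof
    assume "carrier M - {\<one>} = {}"
    then have "carrier M \<subseteq> Units M" by auto
    then show False using \<open>\<not> group M\<close> monoid by (simp add: group_def group_axioms_def)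
  qed
  then obtain a b where ab: "a \<in> carrier M" "b \<in> carrier M" "a \<noteq> \<one>" "b \<noteq> \<one>" "a \<otimes> b = \<one>"
    using not_S unfolding is_subsemigroup_def by auto
  then have a: "a \<in> right_invertibles M" and b: "b \<in> left_invertibles M"
    unfolding right_invertibles_def left_invertibles_def by auto
  consider "right_invertibles M \<noteq> carrier M" | "left_invertibles M \<noteq> carrier M"
    using \<open>\<not> group M\<close> group_if_all_invertible by blast
  then show ?thesis
  proof cases
    case 1
    show ?thesis
      using right_invertibles_mult_left
      by (intro sigma_m_le_2[OF monoid is_submonoid_right_invertibles 1 a ab(3)]) blast
  next
    case 2
    show ?thesis
      using left_invertibles_mult_right
      by (intro sigma_m_le_2[OF monoid is_submonoid_left_invertibles 2 b ab(4)]) blast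
  qed
qed

theorem mainTheorem4:
  fixes M :: "('a, 'b) monoid_scheme"
  assumes "monoid M"
  shows "(group M \<longrightarrow> sigma_m M = sigma_m_star M \<and> sigma_m_star M = sigma_s M)
    \<and> ((carrier M - {\<one>\<^bsub>M\<^esub>} \<noteq> {} \<and>
          is_subsemigroup (mult M) (carrier M) (carrier M - {\<one>\<^bsub>M\<^esub>})) \<longrightarrow>
        sigma_m_star M \<le> sigma_m M \<and>
        sigma_m M = sigma_s_semi (mult M) (carrier M - {\<one>\<^bsub>M\<^esub>}) \<and>
        sigma_s M = 2)
    \<and> ((\<not> group M \<and> \<not> (carrier M - {\<one>\<^bsub>M\<^esub>} \<noteq> {} \<and>
          is_subsemigroup (mult M) (carrier M) (carrier M - {\<one>\<^bsub>M\<^esub>}))) \<longrightarrow>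
        sigma_m M = 2 \<and> sigma_m_star M = 2 \<and> sigma_s M = 2)"
proof (intro conjI impI)
  note chain = sigma_s_le_sigma_m_star[of M] sigma_m_star_le_sigma_m[OF assms]
  show "sigma_m M = sigma_m_star M" "sigma_m_star M = sigma_s M" if "group M"
    using chain group_sigma_m_le_sigma_s[OF that] by (meson order_trans antisym)+
  show "sigma_m_star M \<le> sigma_m M" by (fact chain(2))
  show "sigma_m M = sigma_s_semi (mult M) (carrier M - {\<one>\<^bsub>M\<^esub>})" "sigma_s M = 2"
    if "carrier M - {\<one>\<^bsub>M\<^esub>} \<noteq> {} \<and>
        is_subsemigroup (mult M) (carrier M) (carrier M - {\<one>\<^bsub>M\<^esub>})"
    using that sigma_m_le_sigma_s_nonidentity[OF assms] sigma_s_nonidentity_le_sigma_m[OF assms]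
      sigma_s_eq_2[OF assms] by (auto intro: antisym)
  show "sigma_m M = 2" "sigma_m_star M = 2" "sigma_s M = 2"
    if "\<not> group M \<and> \<not> (carrier M - {\<one>\<^bsub>M\<^esub>} \<noteq> {} \<and>
        is_subsemigroup (mult M) (carrier M) (carrier M - {\<one>\<^bsub>M\<^esub>}))"
    using that chain non_group_sigma_m_le_2[OF assms] sigma_s_ge_2[OF assms]
    by (meson order_trans antisym)+
qed

end
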